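(* Consider heteroskedastic Gaussian bandits with arms $\{1,\dots,p\}$, true means $\beta_0=(\beta_{0,1},\dots,\beta_{0,p})$ and known variances $\sigma_1^2,\dots,\sigma_p^2>0$. For each $n$, an independent trajectory $H^n_{m_n}=((a^n_1,y^n_1),\dots,(a^n_{m_n},y^n_{m_n}))$ is generated by: $a^n_j\sim\Lambda^n(\cdot\mid H^n_{j-1})$ (a distribution on $\{1,\dots,p\}$ depending on the past), then $y^n_j\sim\mathcal{N}(\beta_{0,a^n_j},\sigma^2_{a^n_j})$ conditionally on the past and $a^n_j$. Let $N_{i,n}=\sum_{j=1}^{m_n}\mathbf{1}[a^n_j=i]$ and let $\hat\beta_n$ be the vector of per-arm sample means $\hat\beta_{n,i}=N_{i,n}^{-1}\sum_{j}\mathbf{1}[a^n_j=i]y^n_j$. Assume: (i) $\min_iN_{i,n}\xrightarrow{p}\infty$; (ii) the prior $\pi$ is a continuous and bounded density on $\mathbb{R}^p$ with $\pi(\beta_0)>0$. Then $$\big\|\pi(\cdot\mid H^n_{m_n})-\mathcal{N}\big(\hat\beta_n,\mathrm{diag}(\sigma_i^2N_{i,n}^{-1})\big)\big\|_{\mathrm{TV}}\xrightarrow{p}0.$$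
   Context: The sampling rules $\Lambda^n$ may depend on $n$, while $\beta_0$, the $\sigma_i^2$ and $\pi$ do not. The posterior is $\pi(\beta\mid H^n_{m_n})\propto\pi(\beta)\prod_{j=1}^{m_n}\exp\big(-(y^n_j-\beta_{a^n_j})^2/(2\sigma^2_{a^n_j})\big)$. $\|\cdot\|_{\mathrm{TV}}$ is total variation distance. *)

theory Defs
  imports "HOL-Probability.Probability"
begin

text \<open>Histories of length j: functions nat => arm x reward, extensional on {..<j}.\<close>
definition hist_space :: "nat \<Rightarrow> (nat \<Rightarrow> 'p \<times> real) measure" where
  "hist_space j = PiM {..<j} (\<lambda>_. count_space UNIV \<Otimes>\<^sub>M borel)"

text \<open>Law of the trajectory H_j generated by the adaptive sampling rule L
  (L j h = distribution of the arm a_(j+1) given the past h of length j),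
  true means b0 and standard deviations sd (variances sd i ^ 2).\<close>
primrec traj :: "(nat \<Rightarrow> (nat \<Rightarrow> 'p \<times> real) \<Rightarrow> 'p pmf) \<Rightarrow> ('p \<Rightarrow> real) \<Rightarrow> ('p \<Rightarrow> real)
    \<Rightarrow> nat \<Rightarrow> (nat \<Rightarrow> 'p \<times> real) measure" where
  "traj L b0 sd 0 = return (hist_space 0) (\<lambda>_. undefined)"
| "traj L b0 sd (Suc j) = traj L b0 sd j \<bind> (\<lambda>h. measure_pmf (L j h) \<bind>
      (\<lambda>a. distr (density lborel (normal_density (b0 a) (sd a))) (hist_space (Suc j))
             (\<lambda>y. h(j := (a, y)))))"

definition arm_count :: "nat \<Rightarrow> (nat \<Rightarrow> 'p \<times> real) \<Rightarrow> 'p \<Rightarrow> nat" where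
  "arm_count m h i = card {j. j < m \<and> fst (h j) = i}"

definition sample_mean :: "nat \<Rightarrow> (nat \<Rightarrow> 'p \<times> real) \<Rightarrow> 'p \<Rightarrow> real" where
  "sample_mean m h i = (\<Sum>j<m. if fst (h j) = i then snd (h j) else 0) / real (arm_count m h i)"

definition likelihood :: "('p \<Rightarrow> real) \<Rightarrow> nat \<Rightarrow> (nat \<Rightarrow> 'p \<times> real) \<Rightarrow> real^'p \<Rightarrow> real" where
  "likelihood sd m h \<beta> = (\<Prod>j<m. exp (- (snd (h j) - \<beta> $ fst (h j))\<^sup>2 / (2 * (sd (fst (h j)))\<^sup>2)))"

definition posterior :: "(real^'p \<Rightarrow> real) \<Rightarrow> ('p \<Rightarrow> real) \<Rightarrow> nat \<Rightarrow> (nat \<Rightarrow> 'p \<times> real)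
    \<Rightarrow> (real^'p) measure" where
  "posterior prior sd m h =
     density lborel (\<lambda>\<beta>. ennreal (prior \<beta> * likelihood sd m h \<beta>
        / (\<integral>b. prior b * likelihood sd m h b \<partial>lborel)))"

definition gauss_approx :: "('p::finite \<Rightarrow> real) \<Rightarrow> nat \<Rightarrow> (nat \<Rightarrow> 'p \<times> real) \<Rightarrow> (real^'p) measure" where
  "gauss_approx sd m h =
     density lborel (\<lambda>x. ennreal (\<Prod>i\<in>UNIV. normal_density (sample_mean m h i)
        (sd i / sqrt (real (arm_count m h i))) (x $ i)))"

definition tv_dist :: "'a measure \<Rightarrow> 'a measure \<Rightarrow> real" where
  "tv_dist M N = (SUP A \<in> sets M. \<bar>measure M A - measure N A\<bar>)"

end

theory Submission
  imports Defs "HOL-Real_Asymp.Real_Asymp"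
begin

(* Given the trajectory, the likelihood is a constant multiple of the product Gaussian density
   centred at the sample means with variances sd_i^2 / N_i, so the posterior is that density
   reweighted by the prior and renormalised.  Once every N_i is large this Gaussian lives in a
   small box around the sample means; if they are close to beta0, the continuous prior is nearly
   constant on the box, and reweighting by a nearly constant factor moves a density little in L^1,
   hence in total variation.
   It remains to bound, uniformly over adaptive sampling rules, the probability that an arm pulled
   at least K times has a sample mean far from its true mean.  For every arm i and every l,
   exp (l (S_i - mu_i N_i) - l^2 sd_i^2 N_i / 2) has expectation 1: each pull of arm i multiplies
   it by exp (l (y - mu_i) - l^2 sd_i^2 / 2), whose conditional mean is 1 by the Gaussian moment
   generating function, whatever the past.  A Chernoff bound then gives
   P(N_i >= K, |bhat_i - mu_i| >= r) <= 2 exp (- r^2 K / (2 sd_i^2)). *)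

section \<open>Trajectories as iterated kernels\<close>

definition traj_step :: "(nat \<Rightarrow> (nat \<Rightarrow> 'p \<times> real) \<Rightarrow> 'p pmf) \<Rightarrow> ('p \<Rightarrow> real) \<Rightarrow> ('p \<Rightarrow> real)
    \<Rightarrow> nat \<Rightarrow> (nat \<Rightarrow> 'p \<times> real) \<Rightarrow> (nat \<Rightarrow> 'p \<times> real) measure" where
  "traj_step L mu sd j h = measure_pmf (L j h) \<bind>
      (\<lambda>a. distr (density lborel (normal_density (mu a) (sd a))) (hist_space (Suc j))
             (\<lambda>y. h(j := (a, y))))"

lemma traj_Suc: "traj L mu sd (Suc j) = traj L mu sd j \<bind> traj_step L mu sd j"
  by (simp add: traj_step_def[abs_def])

lemma measurable_measure_pmf_finite:
  fixes L :: "'a \<Rightarrow> 'p::finite pmf"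
  assumes "\<And>a. (\<lambda>x. pmf (L x) a) \<in> borel_measurable M"
  shows "(\<lambda>x. measure_pmf (L x)) \<in> M \<rightarrow>\<^sub>M prob_algebra (count_space UNIV)"
proof (rule measurable_prob_algebraI)
  show "(\<lambda>x. measure_pmf (L x)) \<in> M \<rightarrow>\<^sub>M subprob_algebra (count_space UNIV)"
  proof (rule measurable_subprob_algebra)
    fix A :: "'p set"
    have "(\<lambda>x. ennreal (\<Sum>a\<in>A. pmf (L x) a)) \<in> borel_measurable M"
      using assms by measurable
    then show "(\<lambda>x. emeasure (measure_pmf (L x)) A) \<in> borel_measurable M"
      by (simp add: emeasure_measure_pmf_finite sum_ennreal)
  qed (auto simp: subprob_space_measure_pmf)
qed (rule prob_space_measure_pmf)

lemma measurable_hist_upd: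
  assumes "h \<in> space (hist_space j)" and "sets M = sets borel"
  shows "(\<lambda>y. h(j := (a, y))) \<in> M \<rightarrow>\<^sub>M hist_space (Suc j)"
  unfolding hist_space_def
  by (rule measurable_fun_upd[where J="{..<j}"]) (use assms in \<open>auto simp: hist_space_def\<close>)

lemma measurable_normal_step:
  assumes sd: "sd a > 0"
  shows "(\<lambda>h. distr (density lborel (normal_density (mu a) (sd a))) (hist_space (Suc j)) (\<lambda>y. h(j := (a, y))))
      \<in> hist_space j \<rightarrow>\<^sub>M prob_algebra (hist_space (Suc j))"
proof (rule measurable_prob_algebraI)
  let ?N = "density lborel (normal_density (mu a) (sd a))"
  show "prob_space (distr ?N (hist_space (Suc j)) (\<lambda>y. h(j := (a, y))))"
    if "h \<in> space (hist_space j)" for h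
    using measurable_hist_upd[OF that]
    by (intro prob_space.prob_space_distr prob_space_normal_density sd) simp
  show "(\<lambda>h. distr ?N (hist_space (Suc j)) (\<lambda>y. h(j := (a, y))))
      \<in> hist_space j \<rightarrow>\<^sub>M subprob_algebra (hist_space (Suc j))"
  proof (rule measurable_distr2[where M="?N"])
    show "(\<lambda>(h, y). h(j := (a, y))) \<in> hist_space j \<Otimes>\<^sub>M ?N \<rightarrow>\<^sub>M hist_space (Suc j)"
      unfolding hist_space_def split_beta'
      by (rule measurable_fun_upd[where J="{..<j}"]) auto
    show "(\<lambda>_. ?N) \<in> hist_space j \<rightarrow>\<^sub>M subprob_algebra ?N"
      by (rule measurable_const)
        (auto simp: space_subprob_algebra intro!: prob_space_imp_subprob_space prob_space_normal_density sd)
  qed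
qed

lemma nn_integral_normal_density: "s > 0 \<Longrightarrow> (\<integral>\<^sup>+y. normal_density b s y \<partial>lborel) = 1"
  by (subst nn_integral_eq_integral) auto

lemma normal_density_tilt:
  assumes "s > 0"
  shows "normal_density b s y * exp (l * (y - b) - l^2 * s^2 / 2) = normal_density (b + l * s^2) s y"
proof -
  have "-(y - b)\<^sup>2 / (2 * s\<^sup>2) + (l * (y - b) - l^2 * s^2 / 2) = -(y - (b + l * s^2))\<^sup>2 / (2 * s\<^sup>2)"
    using assms by (simp add: field_simps power2_eq_square)
  then show ?thesis
    unfolding normal_density_def by (simp add: exp_add[symmetric])
qed

lemma nn_integral_traj_step:
  assumes sd: "\<And>i. sd i > 0" and h: "h \<in> space (hist_space j)"
    and f: "f \<in> borel_measurable (hist_space (Suc j))"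
  shows "(\<integral>\<^sup>+x. f x \<partial>traj_step L mu sd j h) =
    (\<integral>\<^sup>+a. \<integral>\<^sup>+y. ennreal (normal_density (mu a) (sd a) y) * f (h(j := (a, y))) \<partial>lborel \<partial>L j h)"
proof -
  let ?N = "\<lambda>a. density lborel (normal_density (mu a) (sd a))"
  have "(\<integral>\<^sup>+x. f x \<partial>traj_step L mu sd j h) =
      (\<integral>\<^sup>+a. \<integral>\<^sup>+x. f x \<partial>distr (?N a) (hist_space (Suc j)) (\<lambda>y. h(j := (a, y))) \<partial>L j h)"
    unfolding traj_step_def
    using measurable_space[OF measurable_prob_algebraD[OF measurable_normal_step[where sd=sd, OF sd]] h]
    by (intro nn_integral_bind[OF f]) auto
  also have "\<dots> = (\<integral>\<^sup>+a. \<integral>\<^sup>+y. ennreal (normal_density (mu a) (sd a) y) * f (h(j := (a, y))) \<partial>lborel \<partial>L j h)"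
    using measurable_hist_upd[OF h] f
    by (intro nn_integral_cong) (simp add: nn_integral_distr nn_integral_density)
  finally show ?thesis .
qed

section \<open>Arm statistics\<close>

definition arm_sum :: "nat \<Rightarrow> (nat \<Rightarrow> 'p \<times> real) \<Rightarrow> 'p \<Rightarrow> real" where
  "arm_sum m h i = (\<Sum>j<m. if fst (h j) = i then snd (h j) else 0)"

lemma real_arm_count_eq_sum: "real (arm_count m h i) = (\<Sum>j<m. if fst (h j) = i then 1 else 0)"
proof -
  have "{j. j < m \<and> fst (h j) = i} = {..<m} \<inter> {j. fst (h j) = i}" by auto
  then show ?thesis by (simp add: arm_count_def sum.If_cases)
qed

lemma sample_mean_eq_arm_sum: "sample_mean m h i = arm_sum m h i / real (arm_count m h i)"
  by (simp add: sample_mean_def arm_sum_def)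

lemma arm_count_upd:
  "real (arm_count (Suc j) (h(j := (a, y))) i) = real (arm_count j h i) + (if a = i then 1 else 0)"
  unfolding real_arm_count_eq_sum by (auto intro!: sum.cong)

lemma arm_sum_upd: "arm_sum (Suc j) (h(j := (a, y))) i = arm_sum j h i + (if a = i then y else 0)"
  unfolding arm_sum_def by (auto intro!: sum.cong)

lemma
  shows measurable_arm_count[measurable]: "(\<lambda>h. real (arm_count m h i)) \<in> borel_measurable (hist_space m)"
    and measurable_arm_sum[measurable]: "(\<lambda>h. arm_sum m h i) \<in> borel_measurable (hist_space m)"
    and measurable_sample_mean[measurable]: "(\<lambda>h. sample_mean m h i) \<in> borel_measurable (hist_space m)"
proof -
  have [measurable]: "(\<lambda>h. h k) \<in> hist_space m \<rightarrow>\<^sub>M count_space UNIV \<Otimes>\<^sub>M borel" if "k \<in> {..<m}" for k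
    unfolding hist_space_def using that by (intro measurable_component_singleton) auto
  show arm_count_measurable[measurable]: "(\<lambda>h. real (arm_count m h i)) \<in> borel_measurable (hist_space m)"
    unfolding real_arm_count_eq_sum by measurable
  show arm_sum_measurable[measurable]: "(\<lambda>h. arm_sum m h i) \<in> borel_measurable (hist_space m)"
    unfolding arm_sum_def by measurable
  show "(\<lambda>h. sample_mean m h i) \<in> borel_measurable (hist_space m)"
    unfolding sample_mean_eq_arm_sum by measurable
qed

definition arm_exponent :: "('p \<Rightarrow> real) \<Rightarrow> ('p \<Rightarrow> real) \<Rightarrow> 'p \<Rightarrow> real \<Rightarrow> nat \<Rightarrow> (nat \<Rightarrow> 'p \<times> real) \<Rightarrow> real" where
  "arm_exponent mu sd i l j h =
     l * (arm_sum j h i - mu i * real (arm_count j h i)) - l^2 * (sd i)^2 / 2 * real (arm_count j h i)"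

lemma measurable_arm_exponent[measurable]: "arm_exponent mu sd i l j \<in> borel_measurable (hist_space j)"
  unfolding arm_exponent_def by measurable

lemma arm_exponent_upd:
  "arm_exponent mu sd i l (Suc j) (h(j := (a, y))) =
     arm_exponent mu sd i l j h + (if a = i then l * (y - mu i) - l^2 * (sd i)^2 / 2 else 0)"
  by (simp add: arm_exponent_def arm_count_upd arm_sum_upd algebra_simps)

lemma arm_exponent_ge_of_deviation:
  assumes sd: "sd i > 0" and r: "r > 0" and K: "K > 0"
    and NK: "K \<le> real (arm_count m h i)" and dev: "r \<le> \<bar>sample_mean m h i - mu i\<bar>"
  shows "\<exists>l \<in> {r / (sd i)^2, - r / (sd i)^2}. r^2 * K / (2 * (sd i)^2) \<le> arm_exponent mu sd i l m h"
proof -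
  define N where "N = real (arm_count m h i)"
  define d where "d = sample_mean m h i - mu i"
  have "N > 0" using NK K by (simp add: N_def)
  obtain t where t: "t = 1 \<or> t = -1" and td: "t * d = \<bar>d\<bar>"
    using that[of 1] that[of "-1"] by (cases "d \<ge> 0") auto
  have "arm_exponent mu sd i (t * r / (sd i)^2) m h = (r * N * \<bar>d\<bar> - r^2 * N / 2) / (sd i)^2"
    using \<open>N > 0\<close> sd t td[symmetric]
    by (auto simp: arm_exponent_def sample_mean_eq_arm_sum d_def N_def[symmetric] field_simps power2_eq_square)
  moreover have "r^2 * K / (2 * (sd i)^2) \<le> (r * N * \<bar>d\<bar> - r^2 * N / 2) / (sd i)^2"
  proof -
    have "r^2 * K \<le> r^2 * N" using NK by (simp add: N_def mult_left_mono)
    moreover have "r^2 * N \<le> r * N * \<bar>d\<bar>"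
      using dev r \<open>N > 0\<close> by (simp add: d_def power2_eq_square)
    ultimately have "r^2 * K / 2 \<le> r * N * \<bar>d\<bar> - r^2 * N / 2" by linarith
    from divide_right_mono[OF this, of "(sd i)^2"] show ?thesis
      by simp
  qed
  ultimately show ?thesis
    using t by auto
qed

definition accurate :: "nat \<Rightarrow> (nat \<Rightarrow> 'p \<times> real) \<Rightarrow> ('p \<Rightarrow> real) \<Rightarrow> real \<Rightarrow> real \<Rightarrow> bool" where
  "accurate m h mu K r \<longleftrightarrow> (\<forall>i. K \<le> real (arm_count m h i) \<and> \<bar>sample_mean m h i - mu i\<bar> < r)"

lemma measurable_accurate[measurable]:
  fixes mu :: "'p::finite \<Rightarrow> real"
  shows "Measurable.pred (hist_space m) (\<lambda>h. accurate m h mu K r)"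
  unfolding accurate_def by measurable

lemma not_accurateD:
  fixes h :: "nat \<Rightarrow> 'p::finite \<times> real"
  assumes "\<not> accurate m h mu K r"
  shows "(MIN i. real (arm_count m h i)) \<le> K
    \<or> (\<exists>i. K \<le> real (arm_count m h i) \<and> r \<le> \<bar>sample_mean m h i - mu i\<bar>)"
proof -
  from assms obtain i where "real (arm_count m h i) < K \<or> r \<le> \<bar>sample_mean m h i - mu i\<bar>"
    by (auto simp: accurate_def not_le not_less)
  moreover have "(MIN i. real (arm_count m h i)) \<le> real (arm_count m h i)"
    by (rule Min_le) auto
  ultimately show ?thesis
    by (meson less_imp_le not_le order.trans)
qed

section \<open>Concentration of the sample means under adaptive sampling\<close>

locale gaussian_bandit =
  fixes L :: "nat \<Rightarrow> (nat \<Rightarrow> 'p::finite \<times> real) \<Rightarrow> 'p pmf" and sd :: "'p \<Rightarrow> real"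
  assumes sd_pos: "\<And>i. sd i > 0"
    and L_measurable: "\<And>j a. (\<lambda>h. pmf (L j h) a) \<in> borel_measurable (hist_space j)"
begin

lemma measurable_traj_step: "traj_step L mu sd j \<in> hist_space j \<rightarrow>\<^sub>M prob_algebra (hist_space (Suc j))"
  unfolding traj_step_def
proof (rule measurable_bind_prob_space2[where N="count_space UNIV"])
  show "(\<lambda>h. measure_pmf (L j h)) \<in> hist_space j \<rightarrow>\<^sub>M prob_algebra (count_space UNIV)"
    by (rule measurable_measure_pmf_finite[OF L_measurable])
  show "(\<lambda>(h, a). distr (density lborel (normal_density (mu a) (sd a))) (hist_space (Suc j))
          (\<lambda>y. h(j := (a, y))))
      \<in> hist_space j \<Otimes>\<^sub>M count_space UNIV \<rightarrow>\<^sub>M prob_algebra (hist_space (Suc j))"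
    unfolding split_beta'
    by (rule measurable_compose_countable'[where g=snd and I=UNIV,
          OF measurable_compose[OF measurable_fst measurable_normal_step[where sd=sd, OF sd_pos]]]) auto
qed

lemma traj_in_prob_algebra: "traj L mu sd j \<in> space (prob_algebra (hist_space j))"
proof (induction j)
  case 0
  have "(\<lambda>_. undefined) \<in> space (hist_space 0)"
    by (simp add: hist_space_def space_PiM)
  then show ?case
    by (auto simp: space_prob_algebra intro: prob_space_return)
next
  case (Suc j)
  show ?case
    unfolding traj_Suc
    by (rule measurable_space[OF measurable_bind_prob_space[OF measurable_const[OF Suc]
          measurable_traj_step], of undefined "count_space UNIV"]) simp
qed

lemma prob_space_traj: "prob_space (traj L mu sd j)"
  and sets_traj: "sets (traj L mu sd j) = sets (hist_space j)"
  and space_traj: "space (traj L mu sd j) = space (hist_space j)"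
  using traj_in_prob_algebra[of mu j]
  by (auto simp: space_prob_algebra intro!: sets_eq_imp_space_eq)

lemma
  shows measurable_arm_count_traj[measurable]: "(\<lambda>h. real (arm_count m h i)) \<in> borel_measurable (traj L mu sd m)"
    and measurable_sample_mean_traj[measurable]: "(\<lambda>h. sample_mean m h i) \<in> borel_measurable (traj L mu sd m)"
    and measurable_arm_exponent_traj[measurable]: "arm_exponent mu sd i l m \<in> borel_measurable (traj L mu sd m)"
    and measurable_accurate_traj[measurable]: "Measurable.pred (traj L mu sd m) (\<lambda>h. accurate m h mu K r)"
  by (simp_all add: measurable_cong_sets[OF sets_traj refl])

lemma nn_integral_exp_arm_exponent:
  "(\<integral>\<^sup>+h. exp (arm_exponent mu sd i l j h) \<partial>traj L mu sd j) = 1"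
proof (induction j)
  case 0
  have "(\<lambda>_. undefined) \<in> space (hist_space 0)"
    by (simp add: hist_space_def space_PiM)
  then show ?case
    by (simp add: nn_integral_return arm_exponent_def arm_sum_def real_arm_count_eq_sum indicator_def)
next
  case (Suc j)
  have step: "(\<integral>\<^sup>+x. exp (arm_exponent mu sd i l (Suc j) x) \<partial>traj_step L mu sd j h)
      = exp (arm_exponent mu sd i l j h)" if h: "h \<in> space (hist_space j)" for h
  proof -
    have "ennreal (normal_density (mu a) (sd a) y) * exp (arm_exponent mu sd i l (Suc j) (h(j := (a, y))))
        = exp (arm_exponent mu sd i l j h) *
          ennreal (normal_density (if a = i then mu a + l * (sd a)^2 else mu a) (sd a) y)" for a y
      using normal_density_tilt[OF sd_pos[of a], of "mu a" y l]
      by (auto simp: arm_exponent_upd exp_add ennreal_mult'[symmetric] mult_ac)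
    then show ?thesis
      by (simp add: nn_integral_traj_step[OF sd_pos h] nn_integral_cmult
          nn_integral_normal_density[OF sd_pos] measure_pmf.emeasure_space_1)
  qed
  have "(\<integral>\<^sup>+h. exp (arm_exponent mu sd i l (Suc j) h) \<partial>traj L mu sd (Suc j))
      = (\<integral>\<^sup>+h. exp (arm_exponent mu sd i l j h) \<partial>traj L mu sd j)"
    unfolding traj_Suc
  proof (rule trans[OF nn_integral_bind[where B="hist_space (Suc j)"] nn_integral_cong])
    show "traj_step L mu sd j \<in> traj L mu sd j \<rightarrow>\<^sub>M subprob_algebra (hist_space (Suc j))"
      using measurable_prob_algebraD[OF measurable_traj_step]
      by (simp add: measurable_cong_sets[OF sets_traj refl])
  qed (simp_all add: space_traj step)
  with Suc show ?case by simp
qed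

lemma emeasure_arm_exponent_ge:
  "emeasure (traj L mu sd m) {h \<in> space (traj L mu sd m). c \<le> arm_exponent mu sd i l m h} \<le> exp (- c)"
proof -
  let ?M = "traj L mu sd m"
  have "emeasure ?M {h \<in> space ?M. c \<le> arm_exponent mu sd i l m h}
      \<le> exp (- 1 * c) * (\<integral>\<^sup>+h. ennreal (exp (1 * arm_exponent mu sd i l m h)) * indicator (space ?M) h \<partial>?M)"
    by (rule Chernoff_ineq_nn_integral_ge) measurable
  also have "\<dots> = exp (- c)"
    by (simp add: nn_integral_exp_arm_exponent cong: nn_integral_cong_simp)
  finally show ?thesis .
qed

lemma emeasure_sample_mean_deviation:
  assumes r: "r > 0" and K: "K > 0"
  shows "emeasure (traj L mu sd m) {h \<in> space (traj L mu sd m).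
      K \<le> real (arm_count m h i) \<and> r \<le> \<bar>sample_mean m h i - mu i\<bar>}
     \<le> 2 * exp (- (r^2 * K / (2 * (sd i)^2)))"
proof -
  let ?M = "traj L mu sd m"
  define c where "c = r^2 * K / (2 * (sd i)^2)"
  define A where "A l = {h \<in> space ?M. c \<le> arm_exponent mu sd i l m h}" for l
  have A_sets: "A l \<in> sets ?M" for l
    unfolding A_def by measurable
  have sub: "{h \<in> space ?M. K \<le> real (arm_count m h i) \<and> r \<le> \<bar>sample_mean m h i - mu i\<bar>}
      \<subseteq> A (r / (sd i)^2) \<union> A (- r / (sd i)^2)"
    using arm_exponent_ge_of_deviation[where sd=sd and i=i, OF sd_pos r K] by (fastforce simp: A_def c_def)
  have "emeasure ?M {h \<in> space ?M. K \<le> real (arm_count m h i) \<and> r \<le> \<bar>sample_mean m h i - mu i\<bar>}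
      \<le> emeasure ?M (A (r / (sd i)^2)) + emeasure ?M (A (- r / (sd i)^2))"
    using A_sets by (intro order.trans[OF emeasure_mono[OF sub] emeasure_subadditive]) auto
  also have "\<dots> \<le> ennreal (exp (- c)) + ennreal (exp (- c))"
    unfolding A_def by (intro add_mono emeasure_arm_exponent_ge)
  finally show ?thesis
    by (simp add: c_def ennreal_plus[symmetric] del: ennreal_plus)
qed

lemma measure_deviation_le:
  assumes r: "r > 0" and K: "K > 0"
  shows "measure (traj L mu sd m) {h \<in> space (traj L mu sd m).
           \<exists>i. K \<le> real (arm_count m h i) \<and> r \<le> \<bar>sample_mean m h i - mu i\<bar>}
     \<le> (\<Sum>i\<in>UNIV. 2 * exp (- (r^2 * K / (2 * (sd i)^2))))"
proof -
  let ?M = "traj L mu sd m"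
  let ?B = "\<lambda>i. {h \<in> space ?M. K \<le> real (arm_count m h i) \<and> r \<le> \<bar>sample_mean m h i - mu i\<bar>}"
  interpret prob_space ?M by (rule prob_space_traj)
  have union: "{h \<in> space ?M. \<exists>i. K \<le> real (arm_count m h i) \<and> r \<le> \<bar>sample_mean m h i - mu i\<bar>} = (\<Union>i. ?B i)"
    by blast
  have "measure ?M (\<Union>i. ?B i) \<le> (\<Sum>i\<in>UNIV. measure ?M (?B i))"
    by (rule measure_UNION_le) auto
  also have "\<dots> \<le> (\<Sum>i\<in>UNIV. 2 * exp (- (r^2 * K / (2 * (sd i)^2))))"
  proof (rule sum_mono)
    fix i
    show "measure ?M (?B i) \<le> 2 * exp (- (r^2 * K / (2 * (sd i)^2)))"
      using emeasure_sample_mean_deviation[OF r K, of mu m i] by (simp add: emeasure_eq_measure)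
  qed
  finally show ?thesis
    unfolding union .
qed


lemma measure_not_accurate_le:
  "measure (traj L mu sd m) {h \<in> space (traj L mu sd m). \<not> accurate m h mu K r}
    \<le> measure (traj L mu sd m) {h \<in> space (traj L mu sd m). (MIN i. real (arm_count m h i)) \<le> K}
      + measure (traj L mu sd m) {h \<in> space (traj L mu sd m).
          \<exists>i. K \<le> real (arm_count m h i) \<and> r \<le> \<bar>sample_mean m h i - mu i\<bar>}"
proof -
  let ?M = "traj L mu sd m"
  let ?A = "{h \<in> space ?M. (MIN i. real (arm_count m h i)) \<le> K}"
  let ?D = "{h \<in> space ?M. \<exists>i. K \<le> real (arm_count m h i) \<and> r \<le> \<bar>sample_mean m h i - mu i\<bar>}"
  interpret prob_space ?M by (rule prob_space_traj)
  have "measure ?M {h \<in> space ?M. \<not> accurate m h mu K r} \<le> measure ?M (?A \<union> ?D)"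
  proof (rule finite_measure_mono)
    show "{h \<in> space ?M. \<not> accurate m h mu K r} \<subseteq> ?A \<union> ?D"
      by (blast dest: not_accurateD)
  qed measurable
  also have "\<dots> \<le> measure ?M ?A + measure ?M ?D"
    by (rule measure_Un_le) measurable
  finally show ?thesis .
qed
end

lemma eventually_measure_deviation_less:
  fixes sd :: "'p::finite \<Rightarrow> real"
  assumes sd: "\<And>i. sd i > 0" and r: "r > 0" and \<delta>: "\<delta> > 0"
  shows "\<forall>\<^sub>F K in at_top. \<forall>L m. gaussian_bandit L sd \<longrightarrow>
           measure (traj L mu sd m) {h \<in> space (traj L mu sd m).
             \<exists>i. K \<le> real (arm_count m h i) \<and> r \<le> \<bar>sample_mean m h i - mu i\<bar>} < \<delta>"
proof -
  define b where "b K = (\<Sum>i\<in>UNIV. 2 * exp (- (r^2 * K / (2 * (sd i)^2))))" for K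
  have "(b \<longlongrightarrow> 0) at_top"
    unfolding b_def
  proof (intro tendsto_null_sum)
    fix i :: 'p
    define a where "a = r^2 / (2 * (sd i)^2)"
    have "a > 0" using r sd[of i] by (simp add: a_def)
    then have "((\<lambda>K. 2 * exp (- (a * K))) \<longlongrightarrow> 0) at_top"
      by real_asymp
    then show "((\<lambda>K. 2 * exp (- (r^2 * K / (2 * (sd i)^2)))) \<longlongrightarrow> 0) at_top"
      by (simp add: a_def)
  qed
  then have "\<forall>\<^sub>F K in at_top. b K < \<delta> \<and> K > 0"
    using \<delta> by (intro eventually_conj order_tendstoD(2) eventually_gt_at_top)
  then show ?thesis
  proof (rule eventually_mono, intro allI impI)
    fix K and L :: "nat \<Rightarrow> (nat \<Rightarrow> 'p \<times> real) \<Rightarrow> 'p pmf" and m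
    assume K: "b K < \<delta> \<and> K > 0"
      and bandit: "gaussian_bandit L sd"
    interpret gaussian_bandit L sd by (rule bandit)
    show "measure (traj L mu sd m) {h \<in> space (traj L mu sd m).
        \<exists>i. K \<le> real (arm_count m h i) \<and> r \<le> \<bar>sample_mean m h i - mu i\<bar>} < \<delta>"
      using measure_deviation_le[OF r, of K mu m] K
      by (simp add: b_def)
  qed
qed

section \<open>Product Gaussian densities and total variation\<close>

lemma nn_integral_lborel_vec_prod:
  fixes f :: "'n::finite \<Rightarrow> real \<Rightarrow> ennreal"
  assumes [measurable]: "\<And>i. f i \<in> borel_measurable borel"
  shows "(\<integral>\<^sup>+x. (\<Prod>i\<in>UNIV. f i (x $ i)) \<partial>(lborel :: (real^'n) measure)) = (\<Prod>i\<in>UNIV. \<integral>\<^sup>+x. f i x \<partial>lborel)"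
proof -
  define F where "F b = f (SOME i. b = axis i 1)" for b :: "real^'n"
  have inj: "inj (\<lambda>i::'n. axis i (1::real))"
    by (auto simp: inj_def axis_eq_axis)
  have basis: "(Basis :: (real^'n) set) = range (\<lambda>i. axis i 1)"
    by (auto simp: Basis_vec_def)
  have F_axis: "F (axis i 1) = f i" for i
    unfolding F_def by (rule arg_cong[where f=f], rule some_equality) (auto simp: axis_eq_axis)
  have "(\<integral>\<^sup>+x. (\<Prod>b\<in>Basis. F b (x \<bullet> b)) \<partial>(lborel :: (real^'n) measure)) = (\<Prod>b\<in>Basis. \<integral>\<^sup>+x. F b x \<partial>lborel)"
    by (rule nn_integral_lborel_prod) (auto simp: basis F_axis)
  then show ?thesis
    unfolding basis by (simp add: prod.reindex[OF inj] F_axis inner_axis)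
qed

definition normal_density_vec :: "('n::finite \<Rightarrow> real) \<Rightarrow> ('n \<Rightarrow> real) \<Rightarrow> real^'n \<Rightarrow> real" where
  "normal_density_vec mu s x = (\<Prod>i\<in>UNIV. normal_density (mu i) (s i) (x $ i))"

lemma normal_density_vec_nonneg: "normal_density_vec mu s x \<ge> 0"
  by (simp add: normal_density_vec_def prod_nonneg)

lemma borel_measurable_normal_density_vec[measurable]: "normal_density_vec mu s \<in> borel_measurable lborel"
  unfolding normal_density_vec_def by measurable

lemma nn_integral_normal_density_moment:
  assumes "s > 0"
  shows "(\<integral>\<^sup>+y. normal_density m s y * (y - m)^2 \<partial>lborel) = s^2"
  using assms integrable_normal_moment[OF assms, of m 2] integral_normal_moment_even[OF assms, of m 1]
  by (subst nn_integral_eq_integral) auto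

lemma has_bochner_integral_normal_density_vec:
  assumes s: "\<And>i. s i > 0"
  shows "has_bochner_integral lborel (normal_density_vec mu s) 1"
proof (rule has_bochner_integral_nn_integral)
  have "(\<integral>\<^sup>+x. normal_density_vec mu s x \<partial>lborel)
      = (\<integral>\<^sup>+x. (\<Prod>i\<in>UNIV. ennreal (normal_density (mu i) (s i) (x $ i))) \<partial>lborel)"
    by (simp add: normal_density_vec_def prod_ennreal)
  also have "\<dots> = 1"
    by (subst nn_integral_lborel_vec_prod) (simp_all add: nn_integral_normal_density[OF s])
  finally show "(\<integral>\<^sup>+x. normal_density_vec mu s x \<partial>lborel) = ennreal 1" by simp
qed (simp_all add: normal_density_vec_nonneg)

lemma has_bochner_integral_normal_density_vec_moment:
  assumes s: "\<And>i. s i > 0"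
  shows "has_bochner_integral lborel (\<lambda>x. normal_density_vec mu s x * (x $ k - mu k)^2) ((s k)^2)"
proof -
  define g where "g i y = normal_density (mu i) (s i) y * (if i = k then (y - mu i)^2 else 1)" for i y
  have "normal_density_vec mu s x * (x $ k - mu k)^2 = (\<Prod>i\<in>UNIV. g i (x $ i))" for x
    by (simp add: g_def normal_density_vec_def prod.distrib)
  then have "(\<integral>\<^sup>+x. normal_density_vec mu s x * (x $ k - mu k)^2 \<partial>lborel)
      = (\<integral>\<^sup>+x. (\<Prod>i\<in>UNIV. ennreal (g i (x $ i))) \<partial>lborel)"
    by (simp add: prod_ennreal g_def)
  also have "\<dots> = (\<Prod>i\<in>UNIV. \<integral>\<^sup>+y. g i y \<partial>lborel)"
    by (rule nn_integral_lborel_vec_prod) (simp add: g_def)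
  also have "\<dots> = (\<Prod>i\<in>UNIV. if i = k then ennreal ((s k)^2) else 1)"
    using s by (intro prod.cong) (auto simp: g_def nn_integral_normal_density_moment nn_integral_normal_density)
  finally show ?thesis
    by (intro has_bochner_integral_nn_integral) (simp_all add: normal_density_vec_nonneg)
qed

lemma integrable_bounded_mult:
  fixes f g :: "'a \<Rightarrow> real"
  assumes "integrable M f" "g \<in> borel_measurable M" "\<And>x. \<bar>g x\<bar> \<le> B"
  shows "integrable M (\<lambda>x. g x * f x)"
proof (rule Bochner_Integration.integrable_bound[OF integrable_mult_right[OF assms(1), of B]])
  show "(\<lambda>x. g x * f x) \<in> borel_measurable M"
    using assms by measurable
  show "AE x in M. norm (g x * f x) \<le> norm (B * f x)"
  proof (rule AE_I2)
    fix x
    have "\<bar>g x\<bar> \<le> \<bar>B\<bar>" using assms(3)[of x] by linarith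
    then show "norm (g x * f x) \<le> norm (B * f x)"
      by (simp add: abs_mult mult_right_mono)
  qed
qed

lemma measure_density_eq_integral:
  fixes g :: "'a \<Rightarrow> real"
  assumes g: "integrable M g" "\<And>x. g x \<ge> 0" and A: "A \<in> sets M"
  shows "measure (density M g) A = (\<integral>x. g x * indicator A x \<partial>M)"
proof -
  have "emeasure (density M g) A = (\<integral>\<^sup>+x. ennreal (g x * indicator A x) \<partial>M)"
    using A g by (simp add: emeasure_density) (intro nn_integral_cong; simp split: split_indicator)
  also have "\<dots> = ennreal (\<integral>x. g x * indicator A x \<partial>M)"
    using A g by (intro nn_integral_eq_integral) (auto intro: integrable_real_mult_indicator)
  finally show ?thesis
    using g by (simp add: measure_def integral_nonneg)
qed

lemma tv_dist_density_le:
  fixes f g :: "'a \<Rightarrow> real"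
  assumes f: "integrable M f" "\<And>x. f x \<ge> 0" and g: "integrable M g" "\<And>x. g x \<ge> 0"
  shows "tv_dist (density M f) (density M g) \<le> (\<integral>x. \<bar>f x - g x\<bar> \<partial>M)"
  unfolding tv_dist_def
proof (rule cSUP_least)
  fix A assume "A \<in> sets (density M f)"
  then have A: "A \<in> sets M" by simp
  have "\<bar>measure (density M f) A - measure (density M g) A\<bar>
      = \<bar>\<integral>x. f x * indicator A x - g x * indicator A x \<partial>M\<bar>"
    using f g A by (simp add: measure_density_eq_integral integrable_real_mult_indicator)
  also have "\<dots> \<le> (\<integral>x. \<bar>f x * indicator A x - g x * indicator A x\<bar> \<partial>M)"
    using integral_norm_bound[of M "\<lambda>x. f x * indicator A x - g x * indicator A x"] by simp
  also have "\<dots> \<le> (\<integral>x. \<bar>f x - g x\<bar> \<partial>M)"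
    using f g A by (intro integral_mono) (auto simp: integrable_real_mult_indicator split: split_indicator)
  finally show "\<bar>measure (density M f) A - measure (density M g) A\<bar> \<le> (\<integral>x. \<bar>f x - g x\<bar> \<partial>M)" .
qed auto

lemma integral_abs_reweighted_density_le:
  fixes f p :: "'a \<Rightarrow> real"
  assumes f: "integrable M f" "\<And>x. f x \<ge> 0" "(\<integral>x. f x \<partial>M) = 1"
    and p: "p \<in> borel_measurable M" "\<And>x. \<bar>p x\<bar> \<le> B"
    and p0: "p0 > 0" and small: "2 * (\<integral>x. \<bar>p x - p0\<bar> * f x \<partial>M) \<le> p0"
  shows "(\<integral>x. p x * f x \<partial>M) > 0"
    and "(\<integral>x. \<bar>p x * f x / (\<integral>x. p x * f x \<partial>M) - f x\<bar> \<partial>M) \<le> 4 * (\<integral>x. \<bar>p x - p0\<bar> * f x \<partial>M) / p0"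
proof -
  define c where "c = (\<integral>x. p x * f x \<partial>M)"
  define D where "D = (\<integral>x. \<bar>p x - p0\<bar> * f x \<partial>M)"
  have int_pf: "integrable M (\<lambda>x. p x * f x)"
    using f(1) p by (rule integrable_bounded_mult)
  have int_dev: "integrable M (\<lambda>x. \<bar>p x - p0\<bar> * f x)"
  proof (rule integrable_bounded_mult[where B="B + p0", OF f(1)])
    show "\<bar>\<bar>p x - p0\<bar>\<bar> \<le> B + p0" for x
      using p(2)[of x] p0 by linarith
  qed (use p in measurable)
  have "\<bar>c - p0\<bar> = \<bar>\<integral>x. (p x - p0) * f x \<partial>M\<bar>"
    using int_pf f by (simp add: c_def left_diff_distrib)
  also have "\<dots> \<le> D"
    using integral_norm_bound[of M "\<lambda>x. (p x - p0) * f x"] f by (simp add: D_def abs_mult)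
  finally have c_p0: "\<bar>c - p0\<bar> \<le> D" .
  then have c: "c \<ge> p0 / 2"
    using small by (simp add: D_def)
  with p0 show "(\<integral>x. p x * f x \<partial>M) > 0"
    by (simp add: c_def)
  have "(\<integral>x. \<bar>p x * f x / c - f x\<bar> \<partial>M) \<le> (\<integral>x. (\<bar>p x - p0\<bar> * f x + \<bar>p0 - c\<bar> * f x) / c \<partial>M)"
  proof (rule integral_mono)
    show "integrable M (\<lambda>x. \<bar>p x * f x / c - f x\<bar>)"
      using int_pf f by simp
    show "integrable M (\<lambda>x. (\<bar>p x - p0\<bar> * f x + \<bar>p0 - c\<bar> * f x) / c)"
      using int_dev f by simp
    fix x
    have "p x * f x / c - f x = (p x - c) * f x / c"
      using c p0 by (simp add: field_simps)
    then have "\<bar>p x * f x / c - f x\<bar> = \<bar>p x - c\<bar> * f x / c"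
      using c p0 f(2)[of x] by (simp add: abs_mult)
    also have "\<dots> \<le> (\<bar>p x - p0\<bar> * f x + \<bar>p0 - c\<bar> * f x) / c"
      using c p0 f(2)[of x] by (intro divide_right_mono) (auto simp: distrib_right[symmetric] intro: mult_right_mono)
    finally show "\<bar>p x * f x / c - f x\<bar> \<le> (\<bar>p x - p0\<bar> * f x + \<bar>p0 - c\<bar> * f x) / c" .
  qed
  also have "\<dots> = (D + \<bar>p0 - c\<bar>) / c"
    using int_dev f by (simp add: D_def)
  also have "\<dots> \<le> 2 * D / (p0 / 2)"
    using c_p0 c p0 by (intro frac_le) (auto simp: D_def)
  finally show "(\<integral>x. \<bar>p x * f x / (\<integral>x. p x * f x \<partial>M) - f x\<bar> \<partial>M) \<le> 4 * (\<integral>x. \<bar>p x - p0\<bar> * f x \<partial>M) / p0"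
    by (simp add: c_def D_def)
qed

lemma abs_diff_le_local_plus_quadratic:
  fixes p :: "real^'n::finite \<Rightarrow> real"
  assumes bounded: "\<And>x. \<bar>p x - p0\<bar> \<le> B"
    and near: "\<And>x. (\<forall>i. \<bar>x $ i - mu i\<bar> < r) \<Longrightarrow> \<bar>p x - p0\<bar> \<le> \<eta>"
    and r: "r > 0" and \<eta>: "\<eta> \<ge> 0"
  shows "\<bar>p x - p0\<bar> \<le> \<eta> + B / r^2 * (\<Sum>i\<in>UNIV. (x $ i - mu i)^2)"
proof -
  have B: "B \<ge> 0" using bounded[of 0] by linarith
  show ?thesis
  proof (cases "\<forall>i. \<bar>x $ i - mu i\<bar> < r")
    case True
    with near[of x] B show ?thesis
      by (simp add: add_increasing2 sum_nonneg)
  next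
    case False
    then obtain i where "r \<le> \<bar>x $ i - mu i\<bar>" by (auto simp: not_less)
    then have "r^2 \<le> (x $ i - mu i)^2"
      using r by (metis abs_le_square_iff abs_of_pos)
    also have "\<dots> \<le> (\<Sum>i\<in>UNIV. (x $ i - mu i)^2)"
      by (rule member_le_sum) auto
    finally have "B \<le> B / r^2 * (\<Sum>i\<in>UNIV. (x $ i - mu i)^2)"
      using r B by (simp add: field_simps mult_left_mono)
    with bounded[of x] \<eta> show ?thesis by linarith
  qed
qed

lemma integral_abs_diff_normal_density_vec_le:
  fixes p :: "real^'n::finite \<Rightarrow> real"
  assumes s: "\<And>i. s i > 0" and p: "p \<in> borel_measurable lborel"
    and bounded: "\<And>x. \<bar>p x - p0\<bar> \<le> B"
    and near: "\<And>x. (\<forall>i. \<bar>x $ i - mu i\<bar> < r) \<Longrightarrow> \<bar>p x - p0\<bar> \<le> \<eta>"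
    and r: "r > 0" and \<eta>: "\<eta> \<ge> 0"
  shows "(\<integral>x. \<bar>p x - p0\<bar> * normal_density_vec mu s x \<partial>lborel) \<le> \<eta> + B / r^2 * (\<Sum>i\<in>UNIV. (s i)^2)"
proof -
  let ?\<phi> = "normal_density_vec mu s"
  have pointwise: "\<bar>p x - p0\<bar> \<le> \<eta> + B / r^2 * (\<Sum>i\<in>UNIV. (x $ i - mu i)^2)" for x
    using bounded near r \<eta> by (rule abs_diff_le_local_plus_quadratic)
  have int_\<phi>: "integrable lborel ?\<phi>" "(\<integral>x. ?\<phi> x \<partial>lborel) = 1"
    using has_bochner_integral_normal_density_vec[where s=s and mu=mu, OF s]
    by (simp_all add: has_bochner_integral_iff)
  have int_moment: "integrable lborel (\<lambda>x. ?\<phi> x * (x $ i - mu i)^2)"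
    "(\<integral>x. ?\<phi> x * (x $ i - mu i)^2 \<partial>lborel) = (s i)^2" for i
    using has_bochner_integral_normal_density_vec_moment[where s=s and mu=mu and k=i, OF s]
    by (simp_all add: has_bochner_integral_iff)
  have "(\<integral>x. \<bar>p x - p0\<bar> * ?\<phi> x \<partial>lborel)
      \<le> (\<integral>x. \<eta> * ?\<phi> x + B / r^2 * (\<Sum>i\<in>UNIV. ?\<phi> x * (x $ i - mu i)^2) \<partial>lborel)"
  proof (rule integral_mono)
    show "integrable lborel (\<lambda>x. \<bar>p x - p0\<bar> * ?\<phi> x)"
      using int_\<phi>(1) by (rule integrable_bounded_mult) (use p bounded in auto)
    show "integrable lborel (\<lambda>x. \<eta> * ?\<phi> x + B / r^2 * (\<Sum>i\<in>UNIV. ?\<phi> x * (x $ i - mu i)^2))"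
      using int_\<phi> int_moment by auto
    fix x
    have "\<bar>p x - p0\<bar> * ?\<phi> x \<le> (\<eta> + B / r^2 * (\<Sum>i\<in>UNIV. (x $ i - mu i)^2)) * ?\<phi> x"
      using pointwise[of x] by (intro mult_right_mono) (auto simp: normal_density_vec_nonneg)
    then show "\<bar>p x - p0\<bar> * ?\<phi> x \<le> \<eta> * ?\<phi> x + B / r^2 * (\<Sum>i\<in>UNIV. ?\<phi> x * (x $ i - mu i)^2)"
      by (simp add: algebra_simps sum_distrib_left)
  qed
  also have "\<dots> = \<eta> + B / r^2 * (\<Sum>i\<in>UNIV. (s i)^2)"
    using int_\<phi> int_moment by simp
  finally show ?thesis .
qed

lemma continuous_box_neighborhood:
  fixes f :: "real^'n::finite \<Rightarrow> real"
  assumes "continuous_on UNIV f" and "\<eta> > 0"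
  obtains r where "r > 0"
    and "\<And>mu x. \<forall>i. \<bar>mu i - x0 $ i\<bar> < r \<Longrightarrow> \<forall>i. \<bar>x $ i - mu i\<bar> < r \<Longrightarrow> \<bar>f x - f x0\<bar> < \<eta>"
proof -
  obtain \<rho> where \<rho>: "\<rho> > 0" and continuity: "\<And>x. dist x x0 < \<rho> \<Longrightarrow> \<bar>f x - f x0\<bar> < \<eta>"
    using assms unfolding continuous_on_iff dist_real_def by (metis UNIV_I)
  define r where "r = \<rho> / (2 * CARD('n))"
  have "\<bar>f x - f x0\<bar> < \<eta>" if "\<forall>i. \<bar>mu i - x0 $ i\<bar> < r" and "\<forall>i. \<bar>x $ i - mu i\<bar> < r" for mu x
  proof -
    have "\<bar>(x - x0) $ i\<bar> < 2 * r" for i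
      using that by (auto simp: abs_diff_less_iff dest!: spec[of _ i])
    then have "(\<Sum>i\<in>UNIV. \<bar>(x - x0) $ i\<bar>) < (\<Sum>i\<in>(UNIV::'n set). 2 * r)"
      by (intro sum_strict_mono) auto
    then have "dist x x0 < \<rho>"
      using norm_le_l1_cart[of "x - x0"] by (simp add: dist_norm r_def)
    then show ?thesis
      by (rule continuity)
  qed
  moreover have "r > 0"
    using \<rho> by (simp add: r_def)
  ultimately show ?thesis
    using that by blast
qed

section \<open>The posterior\<close>

lemma sum_sq_arm_eq_centered:
  assumes "arm_count m h i > 0"
  shows "(\<Sum>k<m. if fst (h k) = i then (snd (h k) - b)^2 else 0) =
    (\<Sum>k<m. if fst (h k) = i then (snd (h k) - sample_mean m h i)^2 else 0)
      + real (arm_count m h i) * (b - sample_mean m h i)^2"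
proof -
  define bh where "bh = sample_mean m h i"
  have "(\<Sum>k<m. if fst (h k) = i then snd (h k) - bh else 0)
      = arm_sum m h i - bh * real (arm_count m h i)"
    unfolding arm_sum_def real_arm_count_eq_sum sum_distrib_left sum_subtractf[symmetric]
    by (intro sum.cong) auto
  also have "\<dots> = 0"
    using assms by (simp add: bh_def sample_mean_eq_arm_sum)
  finally have centered: "(\<Sum>k<m. if fst (h k) = i then snd (h k) - bh else 0) = 0" .
  have "(\<Sum>k<m. if fst (h k) = i then (snd (h k) - b)^2 else 0)
      = (\<Sum>k<m. (if fst (h k) = i then (snd (h k) - bh)^2 else 0)
          + (b - bh)^2 * (if fst (h k) = i then 1 else 0)
          - 2 * (b - bh) * (if fst (h k) = i then snd (h k) - bh else 0))"
    by (intro sum.cong) (auto simp: power2_eq_square algebra_simps)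
  also have "\<dots> = (\<Sum>k<m. if fst (h k) = i then (snd (h k) - bh)^2 else 0)
      + real (arm_count m h i) * (b - bh)^2"
    by (simp add: sum.distrib sum_subtractf sum_distrib_left[symmetric] real_arm_count_eq_sum centered)
  finally show ?thesis by (simp only: bh_def)
qed

lemma likelihood_eq_prod_arms:
  "likelihood sd m h \<beta> =
    (\<Prod>i\<in>UNIV. exp (- (\<Sum>k<m. if fst (h k) = i then (snd (h k) - \<beta> $ i)^2 else 0) / (2 * (sd i)^2)))"
proof -
  have "likelihood sd m h \<beta> = exp (- (\<Sum>k<m. (snd (h k) - \<beta> $ fst (h k))\<^sup>2 / (2 * (sd (fst (h k)))\<^sup>2)))"
    by (simp add: likelihood_def exp_sum[symmetric] sum_negf)
  also have "(\<Sum>k<m. (snd (h k) - \<beta> $ fst (h k))\<^sup>2 / (2 * (sd (fst (h k)))\<^sup>2))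
      = (\<Sum>k<m. \<Sum>i\<in>UNIV. if fst (h k) = i then (snd (h k) - \<beta> $ i)^2 / (2 * (sd i)^2) else 0)"
    by (intro sum.cong refl) (simp add: sum.delta)
  also have "\<dots> = (\<Sum>i\<in>UNIV. (\<Sum>k<m. if fst (h k) = i then (snd (h k) - \<beta> $ i)^2 else 0) / (2 * (sd i)^2))"
    by (subst sum.swap) (auto simp: sum_divide_distrib intro!: sum.cong)
  finally show ?thesis
    by (simp add: exp_sum[symmetric] sum_negf)
qed

definition approx_sd :: "('p \<Rightarrow> real) \<Rightarrow> nat \<Rightarrow> (nat \<Rightarrow> 'p \<times> real) \<Rightarrow> 'p \<Rightarrow> real" where
  "approx_sd sd m h i = sd i / sqrt (real (arm_count m h i))"

lemma sum_approx_sd_sq_le: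
  assumes K: "K > 0" and N: "\<And>i. K \<le> real (arm_count m h i)"
  shows "(\<Sum>i\<in>UNIV. (approx_sd sd m h i)^2) \<le> (\<Sum>i\<in>UNIV. (sd i)^2) / K"
  unfolding sum_divide_distrib
proof (rule sum_mono)
  fix i
  have "(approx_sd sd m h i)^2 = (sd i)^2 / real (arm_count m h i)"
    using K N[of i] by (simp add: approx_sd_def power_divide)
  also have "\<dots> \<le> (sd i)^2 / K"
    using K N[of i] by (intro divide_left_mono) auto
  finally show "(approx_sd sd m h i)^2 \<le> (sd i)^2 / K" .
qed

lemma likelihood_eq_normal_density_vec:
  fixes h :: "nat \<Rightarrow> 'p::finite \<times> real"
  assumes sd: "\<And>i. sd i > 0" and N: "\<And>i. arm_count m h i > 0"
  shows "\<exists>C>0. \<forall>\<beta>. likelihood sd m h \<beta> = C * normal_density_vec (sample_mean m h) (approx_sd sd m h) \<beta>"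
proof -
  define R where "R i = (\<Sum>k<m. if fst (h k) = i then (snd (h k) - sample_mean m h i)^2 else 0)" for i
  define s where "s = approx_sd sd m h"
  define C where "C = (\<Prod>i\<in>UNIV. sqrt (2 * pi * (s i)^2) * exp (- R i / (2 * (sd i)^2)))"
  have s_pos: "s i > 0" for i
    using sd[of i] N[of i] by (simp add: s_def approx_sd_def)
  have s2: "(s i)^2 = (sd i)^2 / real (arm_count m h i)" for i
    using N[of i] by (simp add: s_def approx_sd_def power_divide)
  have arm: "exp (- (\<Sum>k<m. if fst (h k) = i then (snd (h k) - b)^2 else 0) / (2 * (sd i)^2))
      = sqrt (2 * pi * (s i)^2) * exp (- R i / (2 * (sd i)^2)) * normal_density (sample_mean m h i) (s i) b"
    for i b
  proof -
    have "real (arm_count m h i) * (b - sample_mean m h i)^2 / (2 * (sd i)^2)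
        = (b - sample_mean m h i)^2 / (2 * (s i)^2)"
      using N[of i] by (simp add: s2)
    then have "(\<Sum>k<m. if fst (h k) = i then (snd (h k) - b)^2 else 0) / (2 * (sd i)^2)
        = R i / (2 * (sd i)^2) + (b - sample_mean m h i)^2 / (2 * (s i)^2)"
      using sum_sq_arm_eq_centered[OF N[of i], of b] by (simp add: R_def add_divide_distrib)
    then have "exp (- (\<Sum>k<m. if fst (h k) = i then (snd (h k) - b)^2 else 0) / (2 * (sd i)^2))
        = exp (- R i / (2 * (sd i)^2)) * exp (- ((b - sample_mean m h i)^2) / (2 * (s i)^2))"
      by (simp add: exp_add[symmetric] exp_minus[symmetric] del: exp_add)
    with s_pos[of i] show ?thesis
      by (simp add: normal_density_def)
  qed
  have "likelihood sd m h \<beta> = C * normal_density_vec (sample_mean m h) s \<beta>" for \<beta>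
    unfolding likelihood_eq_prod_arms arm by (simp add: C_def normal_density_vec_def prod.distrib)
  moreover have "C > 0"
    unfolding C_def by (intro prod_pos) (simp add: s_pos order.strict_implies_not_eq[OF s_pos, symmetric])
  ultimately show ?thesis
    by (auto simp: s_def)
qed

lemma posterior_eq_density:
  fixes h :: "nat \<Rightarrow> 'p::finite \<times> real"
  assumes "\<And>i. sd i > 0" and "\<And>i. arm_count m h i > 0"
  defines "\<phi> \<equiv> normal_density_vec (sample_mean m h) (approx_sd sd m h)"
  shows "posterior \<pi> sd m h = density lborel (\<lambda>\<beta>. \<pi> \<beta> * \<phi> \<beta> / (\<integral>b. \<pi> b * \<phi> b \<partial>lborel))"
proof -
  obtain C where "C > 0" and C: "\<And>\<beta>. likelihood sd m h \<beta> = C * \<phi> \<beta>"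
    using likelihood_eq_normal_density_vec[where sd=sd, OF assms(1,2)] by (auto simp: \<phi>_def)
  then show ?thesis
    by (simp add: posterior_def C mult.left_commute)
qed

lemma gauss_approx_eq_density:
  "gauss_approx sd m h = density lborel (normal_density_vec (sample_mean m h) (approx_sd sd m h))"
  by (simp add: gauss_approx_def normal_density_vec_def approx_sd_def)

lemma tv_posterior_gauss_approx_le:
  fixes \<pi> :: "real^'p::finite \<Rightarrow> real"
  assumes sd: "\<And>i. sd i > 0" and N: "\<And>i. arm_count m h i > 0"
    and \<pi>: "\<pi> \<in> borel_measurable lborel" "\<And>\<beta>. \<pi> \<beta> \<ge> 0" "\<And>\<beta>. \<pi> \<beta> \<le> M"
    and p0: "p0 > 0"
  defines "D \<equiv> (\<integral>\<beta>. \<bar>\<pi> \<beta> - p0\<bar> * normal_density_vec (sample_mean m h) (approx_sd sd m h) \<beta> \<partial>lborel)"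
  assumes small: "2 * D \<le> p0"
  shows "tv_dist (posterior \<pi> sd m h) (gauss_approx sd m h) \<le> 4 * D / p0"
proof -
  define \<phi> where "\<phi> = normal_density_vec (sample_mean m h) (approx_sd sd m h)"
  have s: "approx_sd sd m h i > 0" for i
    using sd[of i] N[of i] by (simp add: approx_sd_def)
  have \<phi>: "integrable lborel \<phi>" "\<And>x. \<phi> x \<ge> 0" "(\<integral>x. \<phi> x \<partial>lborel) = 1"
    using has_bochner_integral_normal_density_vec[where s="approx_sd sd m h", OF s]
    by (simp_all add: \<phi>_def normal_density_vec_nonneg has_bochner_integral_iff)
  have \<pi>_abs: "\<bar>\<pi> x\<bar> \<le> M" for x
    using \<pi>(2,3)[of x] by simp
  note reweight = integral_abs_reweighted_density_le[OF \<phi> \<pi>(1) \<pi>_abs p0 small[unfolded D_def \<phi>_def[symmetric]]]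
  have "tv_dist (posterior \<pi> sd m h) (gauss_approx sd m h)
      \<le> (\<integral>x. \<bar>\<pi> x * \<phi> x / (\<integral>x. \<pi> x * \<phi> x \<partial>lborel) - \<phi> x\<bar> \<partial>lborel)"
    unfolding posterior_eq_density[OF sd N] gauss_approx_eq_density \<phi>_def[symmetric]
  proof (rule tv_dist_density_le)
    show "integrable lborel (\<lambda>x. \<pi> x * \<phi> x / (\<integral>x. \<pi> x * \<phi> x \<partial>lborel))"
      by (intro integrable_divide integrable_bounded_mult[OF \<phi>(1) \<pi>(1) \<pi>_abs])
    show "\<pi> x * \<phi> x / (\<integral>x. \<pi> x * \<phi> x \<partial>lborel) \<ge> 0" for x
      using reweight(1) \<pi>(2)[of x] \<phi>(2)[of x] by simp
  qed (use \<phi> in auto)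
  also have "\<dots> \<le> 4 * D / p0"
    using reweight(2) by (simp add: D_def \<phi>_def)
  finally show ?thesis .
qed

lemma eventually_tv_posterior_gauss_approx_le:
  fixes \<pi> :: "real^'p::finite \<Rightarrow> real" and \<beta>0 :: "real^'p"
  assumes sd: "\<And>i. sd i > 0" and \<pi>_nonneg: "\<And>\<beta>. \<pi> \<beta> \<ge> 0" and \<pi>_cont: "continuous_on UNIV \<pi>"
    and \<pi>_bounded: "bounded (range \<pi>)" and \<pi>_pos: "\<pi> \<beta>0 > 0" and e: "e > 0"
  shows "\<exists>r>0. \<forall>\<^sub>F K in at_top. \<forall>m h.
    accurate m h (\<lambda>i. \<beta>0 $ i) K r \<longrightarrow> tv_dist (posterior \<pi> sd m h) (gauss_approx sd m h) \<le> e"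
proof -
  define p0 where "p0 = \<pi> \<beta>0"
  have p0: "p0 > 0" using \<pi>_pos by (simp add: p0_def)
  obtain M where M: "\<And>x. \<pi> x \<le> M"
    using \<pi>_bounded unfolding bounded_iff by (metis abs_le_D1 rangeI real_norm_def)
  have \<pi>_dev: "\<bar>\<pi> x - p0\<bar> \<le> M" for x
    using M[of x] M[of \<beta>0] \<pi>_nonneg[of x] p0 by (simp add: p0_def abs_le_iff)
  have \<pi>_measurable: "\<pi> \<in> borel_measurable lborel"
    using borel_measurable_continuous_onI[OF \<pi>_cont] by simp
  define \<eta> where "\<eta> = p0 * min e 1 / 8"
  have \<eta>: "\<eta> > 0" using p0 e by (simp add: \<eta>_def)
  obtain r where r: "r > 0" and near: "\<And>mu x. \<forall>i. \<bar>mu i - \<beta>0 $ i\<bar> < r \<Longrightarrow> \<forall>i. \<bar>x $ i - mu i\<bar> < r \<Longrightarrow> \<bar>\<pi> x - p0\<bar> < \<eta>"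
    using continuous_box_neighborhood[OF \<pi>_cont \<eta>] unfolding p0_def by blast
  define S2 where "S2 = (\<Sum>i\<in>UNIV. (sd i)^2)"
  have "((\<lambda>K. M * S2 / r^2 / K) \<longlongrightarrow> 0) at_top"
    by real_asymp
  then have "\<forall>\<^sub>F K in at_top. K > 0 \<and> M * S2 / r^2 / K < \<eta>"
    using \<eta> by (intro eventually_conj eventually_gt_at_top order_tendstoD(2))
  then show ?thesis
  proof (intro exI[of _ r] conjI r, elim eventually_mono, intro allI impI)
    fix K m h
    assume K: "K > 0 \<and> M * S2 / r^2 / K < \<eta>" and acc: "accurate m h (\<lambda>i. \<beta>0 $ i) K r"
    have pulls: "K \<le> real (arm_count m h i)" and close: "\<bar>sample_mean m h i - \<beta>0 $ i\<bar> < r" for i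
      using acc by (auto simp: accurate_def)
    have N: "arm_count m h i > 0" for i
      using pulls[of i] K by (metis of_nat_0_less_iff order_less_le_trans)
    have s: "approx_sd sd m h i > 0" for i
      using sd[of i] N[of i] by (simp add: approx_sd_def)
    define D where "D = (\<integral>\<beta>. \<bar>\<pi> \<beta> - p0\<bar> * normal_density_vec (sample_mean m h) (approx_sd sd m h) \<beta> \<partial>lborel)"
    have "\<bar>\<pi> x - p0\<bar> \<le> \<eta>" if "\<forall>i. \<bar>x $ i - sample_mean m h i\<bar> < r" for x
      using near[OF _ that] close by (simp add: less_imp_le)
    then have "D \<le> \<eta> + M / r^2 * (\<Sum>i\<in>UNIV. (approx_sd sd m h i)^2)"
      unfolding D_def using \<eta>
      by (intro integral_abs_diff_normal_density_vec_le[OF s \<pi>_measurable \<pi>_dev _ r]) auto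
    also have "M / r^2 * (\<Sum>i\<in>UNIV. (approx_sd sd m h i)^2) \<le> M / r^2 * (S2 / K)"
      using sum_approx_sd_sq_le[OF _ pulls] K M[of \<beta>0] p0 by (intro mult_left_mono) (auto simp: S2_def p0_def)
    finally have D: "D \<le> 2 * \<eta>"
      using K by simp
    then have "2 * D \<le> p0"
      using p0 mult_left_le[of "min e 1" p0] unfolding \<eta>_def by linarith
    then have "tv_dist (posterior \<pi> sd m h) (gauss_approx sd m h) \<le> 4 * D / p0"
      unfolding D_def by (rule tv_posterior_gauss_approx_le[OF sd N \<pi>_measurable \<pi>_nonneg M p0])
    also have "\<dots> \<le> 4 * (2 * \<eta>) / p0"
      using D p0 by (intro divide_right_mono) auto
    also have "\<dots> \<le> e"
      using p0 by (simp add: \<eta>_def)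
    finally show "tv_dist (posterior \<pi> sd m h) (gauss_approx sd m h) \<le> e" .
  qed
qed

theorem mainTheorem9:
  fixes \<Lambda> :: "nat \<Rightarrow> nat \<Rightarrow> (nat \<Rightarrow> 'p::finite \<times> real) \<Rightarrow> 'p pmf"
    and m :: "nat \<Rightarrow> nat"
    and \<beta>0 :: "real^'p"
    and \<sigma> :: "'p \<Rightarrow> real"
    and \<pi> :: "real^'p \<Rightarrow> real"
  assumes sigma_pos: "\<And>i. \<sigma> i > 0"
    and Lambda_meas: "\<And>n j a. (\<lambda>h. pmf (\<Lambda> n j h) a) \<in> borel_measurable (hist_space j)"
    and min_count: "\<And>K::real. (\<lambda>n. measure (traj (\<Lambda> n) (\<lambda>i. \<beta>0 $ i) \<sigma> (m n))
             {h \<in> space (traj (\<Lambda> n) (\<lambda>i. \<beta>0 $ i) \<sigma> (m n)).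
                (MIN i. real (arm_count (m n) h i)) \<le> K}) \<longlonglongrightarrow> 0"
    and prior_nonneg: "\<And>\<beta>. \<pi> \<beta> \<ge> 0"
    and prior_density: "(\<integral>\<^sup>+ \<beta>. ennreal (\<pi> \<beta>) \<partial>lborel) = 1"
    and prior_cont: "continuous_on UNIV \<pi>"
    and prior_bounded: "bounded (range \<pi>)"
    and prior_pos: "\<pi> \<beta>0 > 0"
  shows "\<And>\<epsilon> \<delta>. \<epsilon> > 0 \<Longrightarrow> \<delta> > 0 \<Longrightarrow> eventually (\<lambda>n.
            \<exists>B \<in> sets (traj (\<Lambda> n) (\<lambda>i. \<beta>0 $ i) \<sigma> (m n)).
              {h \<in> space (traj (\<Lambda> n) (\<lambda>i. \<beta>0 $ i) \<sigma> (m n)).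
                 tv_dist (posterior \<pi> \<sigma> (m n) h) (gauss_approx \<sigma> (m n) h) > \<epsilon>} \<subseteq> B
              \<and> measure (traj (\<Lambda> n) (\<lambda>i. \<beta>0 $ i) \<sigma> (m n)) B < \<delta>) sequentially"
proof goal_cases
  case (1 \<epsilon> \<delta>)
  then have \<epsilon>: "\<epsilon> > 0" and \<delta>: "\<delta> > 0" .
  let ?M = "\<lambda>n. traj (\<Lambda> n) (\<lambda>i. \<beta>0 $ i) \<sigma> (m n)"
  have bandit: "gaussian_bandit (\<Lambda> n) \<sigma>" for n
    using sigma_pos Lambda_meas by unfold_locales
  obtain r where r: "r > 0" and close: "\<forall>\<^sub>F K in at_top. \<forall>m' h.
      accurate m' h (\<lambda>i. \<beta>0 $ i) K r \<longrightarrow> tv_dist (posterior \<pi> \<sigma> m' h) (gauss_approx \<sigma> m' h) \<le> \<epsilon>"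
    using eventually_tv_posterior_gauss_approx_le[where sd=\<sigma>, OF sigma_pos prior_nonneg prior_cont
        prior_bounded prior_pos \<epsilon>]
    by blast
  obtain K where tv_le: "\<forall>m' h. accurate m' h (\<lambda>i. \<beta>0 $ i) K r
        \<longrightarrow> tv_dist (posterior \<pi> \<sigma> m' h) (gauss_approx \<sigma> m' h) \<le> \<epsilon>"
    and deviation: "\<forall>L m'. gaussian_bandit L \<sigma> \<longrightarrow> measure (traj L (\<lambda>i. \<beta>0 $ i) \<sigma> m')
        {h \<in> space (traj L (\<lambda>i. \<beta>0 $ i) \<sigma> m').
          \<exists>i. K \<le> real (arm_count m' h i) \<and> r \<le> \<bar>sample_mean m' h i - \<beta>0 $ i\<bar>} < \<delta> / 2"
    using eventually_happens'[OF trivial_limit_at_top_linorder eventually_conj[OF close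
        eventually_measure_deviation_less[where sd=\<sigma>, OF sigma_pos r half_gt_zero[OF \<delta>]]]]
    by blast
  show ?case
    using order_tendstoD(2)[OF min_count[of K] half_gt_zero[OF \<delta>]]
  proof eventually_elim
    case (elim n)
    interpret gaussian_bandit "\<Lambda> n" \<sigma> by (rule bandit)
    let ?B = "{h \<in> space (?M n). \<not> accurate (m n) h (\<lambda>i. \<beta>0 $ i) K r}"
    have "{h \<in> space (?M n). tv_dist (posterior \<pi> \<sigma> (m n) h) (gauss_approx \<sigma> (m n) h) > \<epsilon>} \<subseteq> ?B"
      using tv_le by (auto simp: not_le[symmetric])
    moreover have "?B \<in> sets (?M n)"
      by measurable
    moreover have "measure (?M n) ?B < \<delta>"
      using measure_not_accurate_le[where m="m n" and mu="\<lambda>i. \<beta>0 $ i" and K=K and r=r] elim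
        deviation[rule_format, OF bandit[of n], of "m n"] by linarith
    ultimately show ?case
      by blast
  qed
qed

end
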